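(* The image of $\bar\rho_{A^\vee, \ell}\colon \mathrm{Gal}(\overline{\mathbb{Q}}/\mathbb{Q}) \to \mathrm{GL}_4(\mathbb{F}_{\ell})$ is given by the subgroup \[\left\{ \begin{pmatrix} d & 0 & 0 & 0 \\ -b_1 & a & 0 & 0 \\ z_1-z_2 & -w_1 & d & -w_2 \\ b_2 & 0 & 0 & a \end{pmatrix} \in \mathrm{M}_4(\mathbb{F}_\ell) : a, d \in \mathbb{F}_\ell^{\times},\ b_i,w_i,x_i\in \mathbb{F}_\ell \right\}\leqslant \mathrm{GL}_4(\mathbb{F}_\ell),\] where $z_1-z_2 = a^{-1}(b_1w_1-b_2w_2-dx_1+dx_2) \in \mathbb{F}_\ell$.
   Context: Let $\ell\leqslant 7$ be prime. Let $E_1,E_2$ be elliptic curves over $\mathbb{Q}$ with cyclic subgroups $C_1\leqslant E_1[\ell]$, $C_2\leqslant E_2[\ell]$ of order $\ell$, stable under $\mathrm{Gal}(\overline{\mathbb{Q}}/\mathbb{Q})$, with an isomorphism $c\colon C_1\xrightarrow{\sim} C_2$ of Galois modules. Let $A := (E_1\times E_2)/G$ where $G := \{(P,c(P)) : P\in C_1\}$, with quotient map $q$; $A$ is an abelian surface over $\mathbb{Q}$ and $A^\vee$ denotes its dual. Choose a basis $P_1,P_2,Q_1,Q_2$ of $T_\ell(E_1\times E_2)$ with $\{P_1,P_2\}$ a symplectic basis of $T_\ell E_1$, $\{Q_1,Q_2\}$ a symplectic basis of $T_\ell E_2$, $P_1 \bmod \ell$ generating $C_1$ and $Q_1\bmod\ell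 = c(P_1\bmod \ell)$ generating $C_2$. Assume the image of the $\ell$-adic representation $\rho_{E_1\times E_2,\ell}$ in this basis is the full group of block-diagonal matrices $\mathrm{diag}(A_1,A_2)$ with $A_i=\begin{pmatrix} a+x_i\ell & b_i+y_i\ell\\ w_i\ell & d+z_i\ell\end{pmatrix}$, where $a,d\in\{1,\dots,\ell-1\}$, $b_i\in\{0,\dots,\ell-1\}$, $w_i,x_i,y_i,z_i\in\mathbb{Z}_\ell$, subject to $\det A_1=\det A_2$ (infinitely many such pairs exist). Use the basis of $T_\ell A$ given by the columns of the change of basis matrix $\begin{pmatrix} 1 & 0 & 1/\ell & 0 \\ 0 & 1 & 0 & 0 \\ 0 & 0 & 1/\ell & 0 \\ 0 & 0 & 0 & 1\end{pmatrix}$ inside $V_\ell(E_1\times E_2)$; in this basis the image of $\bar\rho_{A,\ell}$ consists of the matrices $\begin{pmatrix} a & b_1 & x_1-x_2 & -b_2 \\ 0 & d & w_1 & 0 \\ 0 & 0 & a & 0 \\ 0 & 0 & w_2 & d \end{pmatrix}$ with $a,d\in\mathbb{F}_\ell^\times$, $b_i,w_i,x_i\in\mathbb{F}_\ell$. Take the basis of $A^\vee[\ell]$ dual to that of $A[\ell]$ under the Weil pairing, so that $\bar\rho_{A^\vee,\ell}\cong\bar\rho_{A,\ell}^{*}\otimes\varepsilon_\ell$ (contragredient twisted by the mod $\ell$ cyclotomic character, which acts by multiplication by $ad$). *)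

theory Defs
  imports "HOL-Analysis.Analysis"
begin

text \<open>4x4 matrices over a field are of type 'a^4^4; rows are given by vector.
  The image of the mod-ell representation of A in the chosen basis.\<close>
definition rhoA_image :: "(('a::field)^4^4) set" where
  "rhoA_image = {vector [vector [a, b1, x1 - x2, - b2],
                         vector [0, d, w1, 0],
                         vector [0, 0, a, 0],
                         vector [0, 0, w2, d]] | a d b1 b2 w1 w2 x1 x2.
                  a \<noteq> 0 \<and> d \<noteq> 0}"

definition rhoAdual_image :: "(('a::field)^4^4) set" where
  "rhoAdual_image = {vector [vector [d, 0, 0, 0],
                             vector [- b1, a, 0, 0],
                             vector [inverse a * (b1 * w1 - b2 * w2 - d * x1 + d * x2), - w1, d, - w2],
                             vector [b2, 0, 0, a]] | a d b1 b2 w1 w2 x1 x2.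
                      a \<noteq> 0 \<and> d \<noteq> 0}"

definition dual_twist :: "('g \<Rightarrow> ('a::field)^4^4) \<Rightarrow> ('g \<Rightarrow> 'a) \<Rightarrow> 'g \<Rightarrow> 'a^4^4" where
  "dual_twist rho eps g = (\<chi> i j. eps g * (transpose (matrix_inv (rho g))) $ i $ j)"

end

theory Submission
  imports Defs
begin

(* The twisting character is read off the matrix rho g itself, as the product of its (1,1) and
   (2,2) entries, so rho_{A^dual} = T o rho for the single map T : M \<mapsto> M11 M22 (M^-1)^T, and
   its image is T applied to the image of rho_A.  On the parametrised upper-triangular matrices
   of that image the inverse can be written down explicitly, and T of such a matrix is the
   claimed dual matrix with the same parameters. *)

lemma vector_4 [simp]:
  "(vector [x, y, z, w] :: ('a::zero)^4) $ 1 = x"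
  "(vector [x, y, z, w] :: ('a::zero)^4) $ 2 = y"
  "(vector [x, y, z, w] :: ('a::zero)^4) $ 3 = z"
  "(vector [x, y, z, w] :: ('a::zero)^4) $ 4 = w"
  unfolding vector_def by simp_all

lemma matrix_inv_unique:
  fixes A :: "'a::semiring_1^'n^'m" and B :: "'a^'m^'n"
  assumes right: "A ** B = mat 1" and left: "B ** A = mat 1"
  shows "matrix_inv A = B"
proof -
  have "A ** matrix_inv A = mat 1 \<and> matrix_inv A ** A = mat 1"
    unfolding matrix_inv_def by (rule someI[of _ B]) (use right left in blast)
  then have "matrix_inv A = (B ** A) ** matrix_inv A"
    using left by simp
  also have "\<dots> = B"
    using \<open>A ** matrix_inv A = mat 1 \<and> _\<close> by (simp add: matrix_mul_assoc[symmetric])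
  finally show ?thesis .
qed

definition twisted_contragredient :: "'a::field^4^4 \<Rightarrow> 'a^4^4" where
  "twisted_contragredient M = (\<chi> i j. (M $ 1 $ 1 * M $ 2 $ 2) * transpose (matrix_inv M) $ i $ j)"

lemma dual_twist_eq_comp:
  assumes "\<forall>g. eps g = rho g $ 1 $ 1 * rho g $ 2 $ 2"
  shows "dual_twist rho eps = twisted_contragredient \<circ> rho"
  using assms by (simp add: fun_eq_iff dual_twist_def twisted_contragredient_def)

definition rhoA_matrix :: "'a::field \<Rightarrow> 'a \<Rightarrow> 'a \<Rightarrow> 'a \<Rightarrow> 'a \<Rightarrow> 'a \<Rightarrow> 'a \<Rightarrow> 'a \<Rightarrow> 'a^4^4" where
  "rhoA_matrix a d b1 b2 w1 w2 x1 x2 =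
     vector [vector [a, b1, x1 - x2, - b2],
             vector [0, d, w1, 0],
             vector [0, 0, a, 0],
             vector [0, 0, w2, d]]"

definition rhoA_matrix_inverse :: "'a::field \<Rightarrow> 'a \<Rightarrow> 'a \<Rightarrow> 'a \<Rightarrow> 'a \<Rightarrow> 'a \<Rightarrow> 'a \<Rightarrow> 'a \<Rightarrow> 'a^4^4" where
  "rhoA_matrix_inverse a d b1 b2 w1 w2 x1 x2 =
     vector [vector [1/a, - b1/(a*d), (b1*w1 - b2*w2 - d*(x1 - x2))/(a*a*d), b2/(a*d)],
             vector [0, 1/d, - w1/(a*d), 0],
             vector [0, 0, 1/a, 0],
             vector [0, 0, - w2/(a*d), 1/d]]"

definition rhoAdual_matrix :: "'a::field \<Rightarrow> 'a \<Rightarrow> 'a \<Rightarrow> 'a \<Rightarrow> 'a \<Rightarrow> 'a \<Rightarrow> 'a \<Rightarrow> 'a \<Rightarrow> 'a^4^4" where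
  "rhoAdual_matrix a d b1 b2 w1 w2 x1 x2 =
     vector [vector [d, 0, 0, 0],
             vector [- b1, a, 0, 0],
             vector [inverse a * (b1 * w1 - b2 * w2 - d * x1 + d * x2), - w1, d, - w2],
             vector [b2, 0, 0, a]]"

lemma rhoA_image_eq:
  "rhoA_image = {rhoA_matrix a d b1 b2 w1 w2 x1 x2 | a d b1 b2 w1 w2 x1 x2. a \<noteq> 0 \<and> d \<noteq> 0}"
  unfolding rhoA_image_def rhoA_matrix_def ..

lemma rhoAdual_image_eq:
  "rhoAdual_image = {rhoAdual_matrix a d b1 b2 w1 w2 x1 x2 | a d b1 b2 w1 w2 x1 x2. a \<noteq> 0 \<and> d \<noteq> 0}"
  unfolding rhoAdual_image_def rhoAdual_matrix_def ..

lemma matrix_inv_rhoA_matrix: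
  assumes "a \<noteq> 0" "d \<noteq> 0"
  shows "matrix_inv (rhoA_matrix a d b1 b2 w1 w2 x1 x2) = rhoA_matrix_inverse a d b1 b2 w1 w2 x1 x2"
  using assms
  by (intro matrix_inv_unique)
     (simp_all add: vec_eq_iff forall_4 sum_4 matrix_matrix_mult_def mat_def
       rhoA_matrix_def rhoA_matrix_inverse_def field_simps)

lemma twisted_contragredient_rhoA_matrix:
  assumes "a \<noteq> 0" "d \<noteq> 0"
  shows "twisted_contragredient (rhoA_matrix a d b1 b2 w1 w2 x1 x2) = rhoAdual_matrix a d b1 b2 w1 w2 x1 x2"
  using assms
  by (simp add: twisted_contragredient_def matrix_inv_rhoA_matrix vec_eq_iff forall_4 transpose_def
      rhoA_matrix_inverse_def rhoAdual_matrix_def field_simps) (simp add: rhoA_matrix_def)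

lemma twisted_contragredient_image_rhoA_image:
  "twisted_contragredient ` rhoA_image = rhoAdual_image"
proof -
  have "twisted_contragredient ` rhoA_image =
      {twisted_contragredient (rhoA_matrix a d b1 b2 w1 w2 x1 x2) | a d b1 b2 w1 w2 x1 x2. a \<noteq> 0 \<and> d \<noteq> 0}"
    unfolding rhoA_image_eq by blast
  also have "\<dots> = rhoAdual_image"
    unfolding rhoAdual_image_eq by (metis twisted_contragredient_rhoA_matrix)
  finally show ?thesis .
qed

theorem proposition3p10:
  fixes rho :: "'g \<Rightarrow> ('a::{field,finite})^4^4"
    and rhoD :: "'g \<Rightarrow> 'a^4^4"
    and eps :: "'g \<Rightarrow> 'a"
    and ell :: nat
  assumes "prime ell" and "ell \<le> 7" and "CARD('a) = ell"
    and "range rho = rhoA_image"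
    and "\<forall>g. eps g = rho g $ 1 $ 1 * rho g $ 2 $ 2"
    and "\<forall>g. rhoD g = dual_twist rho eps g"
  shows "range rhoD = rhoAdual_image"
proof -
  have "rhoD = twisted_contragredient \<circ> rho"
    using assms(6) dual_twist_eq_comp[OF assms(5)] by auto
  then have "range rhoD = twisted_contragredient ` range rho"
    by (simp add: image_comp)
  then show ?thesis
    using assms(4) twisted_contragredient_image_rhoA_image by simp
qed

end
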